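(* Let $\xi>0$, $\omega_0>0$, and define $\omega^2(k)=\frac{\omega_0^2}{\xi^2}\big((\xi-\cos k)^2+\sin^2 k\big)$, $\Omega_0=\frac{\omega_0}{\xi}|1-\xi|$, $\Omega_D=\frac{\omega_0}{\xi}(1+\xi)$, and for an integer $n$ and real $\omega$ with $\omega^2(k)\ne\omega^2$ for all $k$, $$\mathcal G_n(\omega)=\frac{1}{2\pi}\int_0^{2\pi}\frac{e^{ikn}}{\omega^2(k)-\omega^2}\,dk .$$ Then for $\omega>\Omega_D$ and every integer $n$, $$\mathcal G_n(\omega)=\frac{-1}{\sqrt{(\Omega_D^2-\omega^2)(\Omega_0^2-\omega^2)}}\left(\frac{\Omega_D^2+\Omega_0^2-2\omega^2+2\sqrt{(\Omega_D^2-\omega^2)(\Omega_0^2-\omega^2)}}{\Omega_D^2-\Omega_0^2}\right)^{|n|},$$ which is real-valued.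
   Context: $\mathcal G_n$ is the frequency-domain lattice Green's function (entry with $|p-q|=n$) of the exponentially graded linear chain (masses $m_0\xi^{2p}$, spring constants $m_0\xi^{2p}\omega_0^2$) in the limit of infinitely many particles, in the symmetrized variables $y_p=\xi^pu_p$; $\Omega_0$ and $\Omega_D$ are the lowest and highest (Debye) eigenfrequencies. *)

theory Defs
  imports "HOL-Analysis.Analysis"
begin

definition omega_sq :: "real \<Rightarrow> real \<Rightarrow> real \<Rightarrow> real" where
  "omega_sq \<xi> \<omega>\<^sub>0 k = (\<omega>\<^sub>0\<^sup>2 / \<xi>\<^sup>2) * ((\<xi> - cos k)\<^sup>2 + (sin k)\<^sup>2)"

definition Omega0 :: "real \<Rightarrow> real \<Rightarrow> real" where
  "Omega0 \<xi> \<omega>\<^sub>0 = (\<omega>\<^sub>0 / \<xi>) * \<bar>1 - \<xi>\<bar>"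

definition OmegaD :: "real \<Rightarrow> real \<Rightarrow> real" where
  "OmegaD \<xi> \<omega>\<^sub>0 = (\<omega>\<^sub>0 / \<xi>) * (1 + \<xi>)"

definition greenG :: "real \<Rightarrow> real \<Rightarrow> int \<Rightarrow> real \<Rightarrow> complex" where
  "greenG \<xi> \<omega>\<^sub>0 n \<omega> = (1 / (2 * pi)) *
     integral {0..2*pi} (\<lambda>k. cis (k * of_int n) / complex_of_real (omega_sq \<xi> \<omega>\<^sub>0 k - \<omega>\<^sup>2))"

end

theory Submission
  imports Defs
begin

text \<open>Write \<open>\<omega>\<^sup>2(k) - \<omega>\<^sup>2 = a - b cos k\<close> with \<open>b > 0 > a + b\<close>. With \<open>s = sqrt((a+b)(a-b))\<close> and
  \<open>q = (a + s)/b \<in> (-1, 0)\<close>, the integrand is \<open>-1/s\<close> times the Poisson kernel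
  \<open>(1 - q\<^sup>2)/(1 - 2q cos k + q\<^sup>2) = 1/(1 - q e\<^sup>i\<^sup>k) + 1/(1 - q e\<^sup>-\<^sup>i\<^sup>k) - 1 = \<Sum>\<^sub>m q\<^bsup>|m|\<^esup> e\<^bsup>imk\<^esup>\<close>,
  whose \<open>n\<close>-th Fourier coefficient is \<open>q\<^bsup>|n|\<^esup>\<close>. Integrating the geometric series term by term is
  justified by truncating it after \<open>N\<close> terms: the tail has modulus at most \<open>|q|\<^sup>N/(1 - |q|)\<close>.\<close>

lemma has_integral_cis_int:
  fixes j :: int
  shows "((\<lambda>k. cis (k * of_int j)) has_integral (if j = 0 then of_real (2 * pi) else 0)) {0..2*pi}"
proof (cases "j = 0")
  case True
  then show ?thesis
    using has_integral_const_real[of "1::complex" 0 "2*pi"] by (simp add: scaleR_conv_of_real)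
next
  case False
  define F where "F k = cis (k * of_int j) / (\<i> * of_int j)" for k
  have "(F has_vector_derivative cis (x * of_int j)) (at x within {0..2*pi})" for x
  proof -
    have "((\<lambda>k. cis (k * of_int j)) has_vector_derivative (of_int j * (\<i> * cis (x * of_int j))))
            (at x within {0..2*pi})"
      unfolding has_vector_derivative_def
      by (rule derivative_eq_intros has_derivative_cis | simp)+
         (simp add: scaleR_conv_of_real mult.assoc)
    from has_vector_derivative_divide[OF this, of "\<i> * of_int j"] False show ?thesis
      unfolding F_def by (simp add: field_simps)
  qed
  then have "((\<lambda>k. cis (k * of_int j)) has_integral F (2 * pi) - F 0) {0..2*pi}"
    by (intro fundamental_theorem_of_calculus) auto
  moreover have "F (2 * pi) = F 0"
    using cis_multiple_2pi[of "of_int j"] unfolding F_def by (simp add: mult.commute)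
  ultimately show ?thesis
    using False by simp
qed

lemma norm_one_minus_of_real_cis_ge: "1 - \<bar>q\<bar> \<le> norm (1 - of_real q * cis t)"
  using norm_triangle_ineq2[of 1 "of_real q * cis t"] by (simp add: norm_mult)

lemma one_minus_of_real_cis_nonzero: "\<bar>q\<bar> < 1 \<Longrightarrow> 1 - of_real q * cis t \<noteq> 0"
  using norm_one_minus_of_real_cis_ge[of q t] by auto

lemma eq_if_norm_diff_le_power:
  fixes x y :: "'a::real_normed_vector"
  assumes r: "\<bar>r\<bar> < 1" and bound: "\<And>N. N \<ge> N0 \<Longrightarrow> norm (x - y) \<le> C * \<bar>r\<bar> ^ N"
  shows "x = y"
proof -
  have "(\<lambda>N. C * \<bar>r\<bar> ^ N) \<longlonglongrightarrow> 0"
    using r by (intro tendsto_mult_right_zero LIMSEQ_power_zero) simp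
  from LIMSEQ_le_const[OF this] bound have "norm (x - y) \<le> 0" by blast
  then show ?thesis by simp
qed

lemma cis_mult_of_real_cis_power:
  fixes q k :: real and n :: int
  shows "cis (k * of_int n) * (of_real q * cis k) ^ m = of_real (q ^ m) * cis (k * of_int (n + int m))"
  \<comment> \<open>\<open>DeMoivre\<close> alone refers to the cos/sin version from \<open>Complex_Transcendental\<close>\<close>
  by (simp add: power_mult_distrib Complex.DeMoivre cis_mult algebra_simps)

lemma sum_power_times_delta:
  fixes q :: real and n :: int
  assumes "nat \<bar>n\<bar> < N"
  shows "(\<Sum>m<N. of_real (q ^ m) * (if n + int m = 0 then of_real (2 * pi) else 0))
       = (if n \<le> 0 then of_real (2 * pi * q ^ nat \<bar>n\<bar>) else (0::complex))"
proof -
  have "(\<Sum>m<N. of_real (q ^ m) * (if n + int m = 0 then of_real (2 * pi) else 0))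
      = (\<Sum>m<N. if n \<le> 0 \<and> m = nat \<bar>n\<bar> then of_real (2 * pi * q ^ m) else (0::complex))"
    by (intro sum.cong) auto
  then show ?thesis
    using assms by (simp add: sum.delta' abs_if)
qed

lemma has_integral_cis_div_one_minus_cis:
  fixes q :: real and n :: int
  assumes q: "\<bar>q\<bar> < 1"
  shows "((\<lambda>k. cis (k * of_int n) / (1 - of_real q * cis k)) has_integral
           (if n \<le> 0 then of_real (2 * pi * q ^ nat \<bar>n\<bar>) else 0)) {0..2*pi}"
    (is "(?f has_integral ?T) _")
proof -
  have "continuous_on {0..2*pi} ?f"
    using one_minus_of_real_cis_nonzero[OF q] by (intro continuous_intros) auto
  then have f_int: "(?f has_integral integral {0..2*pi} ?f) {0..2*pi}"
    by (simp add: integrable_continuous_interval integrable_integral)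
  have remainder_bound: "norm (integral {0..2*pi} ?f - ?T) \<le> (2 * pi / (1 - \<bar>q\<bar>)) * \<bar>q\<bar> ^ N"
    if N: "N \<ge> nat \<bar>n\<bar> + 1" for N
  proof -
    define R where "R k = cis (k * of_int n) * (of_real q * cis k) ^ N / (1 - of_real q * cis k)" for k
    have geometric_split: "?f k = (\<Sum>m<N. of_real (q ^ m) * cis (k * of_int (n + int m))) + R k" for k
    proof -
      define z where "z = of_real q * cis k"
      have "1 - z \<noteq> 0"
        unfolding z_def by (rule one_minus_of_real_cis_nonzero[OF q])
      then have "1 / (1 - z) = (\<Sum>m<N. z ^ m) + z ^ N / (1 - z)"
        by (simp add: sum_gp_strict field_simps)
      then have "?f k = cis (k * of_int n) * ((\<Sum>m<N. z ^ m) + z ^ N / (1 - z))"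
        unfolding z_def by (metis times_divide_eq_right mult.right_neutral)
      also have "\<dots> = (\<Sum>m<N. cis (k * of_int n) * z ^ m) + R k"
        unfolding R_def z_def by (simp add: sum_distrib_left distrib_left)
      finally show ?thesis
        unfolding z_def cis_mult_of_real_cis_power .
    qed
    have "((\<lambda>k. \<Sum>m<N. of_real (q ^ m) * cis (k * of_int (n + int m))) has_integral
             (\<Sum>m<N. of_real (q ^ m) * (if n + int m = 0 then of_real (2 * pi) else 0))) {0..2*pi}"
      by (intro has_integral_sum finite_lessThan has_integral_mult_right has_integral_cis_int)
    moreover have "nat \<bar>n\<bar> < N"
      using N by simp
    ultimately have "((\<lambda>k. \<Sum>m<N. of_real (q ^ m) * cis (k * of_int (n + int m))) has_integral ?T) {0..2*pi}"
      by (simp only: sum_power_times_delta)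
    from has_integral_diff[OF f_int this]
    have "(R has_integral integral {0..2*pi} ?f - ?T) (cbox 0 (2*pi))"
      by (simp add: geometric_split)
    moreover have "norm (R t) \<le> \<bar>q\<bar> ^ N / (1 - \<bar>q\<bar>)" for t
      unfolding R_def norm_divide norm_mult norm_power
      using norm_one_minus_of_real_cis_ge[of q t] q by (intro frac_le) auto
    ultimately have "norm (integral {0..2*pi} ?f - ?T)
                       \<le> \<bar>q\<bar> ^ N / (1 - \<bar>q\<bar>) * Henstock_Kurzweil_Integration.content (cbox 0 (2*pi))"
      using q by (intro has_integral_bound) auto
    also have "\<dots> = (2 * pi / (1 - \<bar>q\<bar>)) * \<bar>q\<bar> ^ N"
      by simp
    finally show ?thesis .
  qed
  have "integral {0..2*pi} ?f = ?T"
    by (rule eq_if_norm_diff_le_power[OF q remainder_bound])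
  with f_int show ?thesis by simp
qed

lemma has_integral_cis_div_one_minus_cis_neg:
  fixes q :: real and n :: int
  assumes q: "\<bar>q\<bar> < 1"
  shows "((\<lambda>k. cis (k * of_int n) / (1 - of_real q * cis (- k))) has_integral
           (if 0 \<le> n then of_real (2 * pi * q ^ nat \<bar>n\<bar>) else 0)) {0..2*pi}"
proof -
  let ?f = "\<lambda>k. cis (k * of_int (- n)) / (1 - of_real q * cis k)"
  have "((cnj \<circ> ?f) has_integral cnj (if - n \<le> 0 then of_real (2 * pi * q ^ nat \<bar>- n\<bar>) else 0)) {0..2*pi}"
    unfolding has_integral_cnj by (rule has_integral_cis_div_one_minus_cis[OF q])
  moreover have "cnj \<circ> ?f = (\<lambda>k. cis (k * of_int n) / (1 - of_real q * cis (- k)))"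
    by (simp add: fun_eq_iff cis_cnj)
  moreover have "cnj (if - n \<le> 0 then of_real (2 * pi * q ^ nat \<bar>- n\<bar>) else 0)
               = (if 0 \<le> n then of_real (2 * pi * q ^ nat \<bar>n\<bar>) else (0::complex))"
    by simp
  ultimately show ?thesis
    by (simp only:)
qed

lemma poisson_kernel_eq:
  fixes q k :: real
  assumes q: "\<bar>q\<bar> < 1"
  shows "1 / (1 - of_real q * cis k) + 1 / (1 - of_real q * cis (- k)) - 1
       = complex_of_real ((1 - q\<^sup>2) / (1 - 2 * q * cos k + q\<^sup>2))"
proof -
  define z w where "z = of_real q * cis k" and "w = of_real q * cis (- k)"
  have z: "1 - z \<noteq> 0" and w: "1 - w \<noteq> 0"
    unfolding z_def w_def by (rule one_minus_of_real_cis_nonzero[OF q])+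
  moreover have "(1 - z) * (1 - w) = 1 + w * z - (w + z)"
    by (simp add: algebra_simps)
  ultimately have "1 + w * z - (w + z) \<noteq> 0"
    by (metis mult_eq_0_iff)
  with z w have "1 / (1 - z) + 1 / (1 - w) - 1 = (1 - z * w) / ((1 - z) * (1 - w))"
    by (simp add: field_simps)
  also have "z * w = of_real (q\<^sup>2)"
    unfolding z_def w_def by (simp add: power2_eq_square cis_mult algebra_simps)
  also have "(1 - z) * (1 - w) = 1 - (z + w) + of_real (q\<^sup>2)"
    using \<open>z * w = _\<close> by (simp add: algebra_simps)
  also have "z + w = of_real (2 * q * cos k)"
    unfolding z_def w_def by (simp add: complex_eq_iff)
  finally show ?thesis
    unfolding z_def w_def by simp
qed

lemma has_integral_cis_poisson_kernel:
  fixes q :: real and n :: int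
  assumes q: "\<bar>q\<bar> < 1"
  shows "((\<lambda>k. cis (k * of_int n) * of_real ((1 - q\<^sup>2) / (1 - 2 * q * cos k + q\<^sup>2))) has_integral
           of_real (2 * pi * q ^ nat \<bar>n\<bar>)) {0..2*pi}"
proof -
  have "((\<lambda>k. cis (k * of_int n) / (1 - of_real q * cis k) + cis (k * of_int n) / (1 - of_real q * cis (- k))
               - cis (k * of_int n)) has_integral
          (if n \<le> 0 then of_real (2 * pi * q ^ nat \<bar>n\<bar>) else 0)
        + (if 0 \<le> n then of_real (2 * pi * q ^ nat \<bar>n\<bar>) else 0)
        - (if n = 0 then of_real (2 * pi) else 0)) {0..2*pi}"
    by (intro has_integral_diff has_integral_add has_integral_cis_div_one_minus_cis
        has_integral_cis_div_one_minus_cis_neg has_integral_cis_int q)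
  moreover have "cis (k * of_int n) / (1 - of_real q * cis k) + cis (k * of_int n) / (1 - of_real q * cis (- k))
                 - cis (k * of_int n)
               = cis (k * of_int n) * of_real ((1 - q\<^sup>2) / (1 - 2 * q * cos k + q\<^sup>2))" for k
  proof -
    have "cis (k * of_int n) / (1 - of_real q * cis k) + cis (k * of_int n) / (1 - of_real q * cis (- k))
            - cis (k * of_int n)
          = cis (k * of_int n) * (1 / (1 - of_real q * cis k) + 1 / (1 - of_real q * cis (- k)) - 1)"
      by (simp add: algebra_simps)
    then show ?thesis
      unfolding poisson_kernel_eq[OF q] .
  qed
  ultimately show ?thesis
    by (cases "n = 0") (auto split: if_splits)
qed

lemma poisson_parameter_bounds:
  fixes a b :: real
  assumes b: "b > 0" and ab: "a + b < 0"
  defines "s \<equiv> sqrt ((a + b) * (a - b))"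
  defines "q \<equiv> (a + s) / b"
  shows "s > 0" and "\<bar>q\<bar> < 1"
proof -
  have "(a + b) * (a - b) > 0"
    using ab b by (intro mult_neg_neg) auto
  then have s_pos: "s > 0" and s_sq: "s\<^sup>2 = a\<^sup>2 - b\<^sup>2"
    unfolding s_def by (simp_all add: power2_eq_square algebra_simps)
  then show "s > 0"
    by simp
  have "s\<^sup>2 < (- a)\<^sup>2"
    using s_sq b by simp
  then have "s < - a"
    by (rule power_less_imp_less_base) (use ab b in linarith)
  have "(- (a + b))\<^sup>2 < s\<^sup>2"
    using s_sq mult_pos_neg[OF b ab] by (simp add: power2_eq_square algebra_simps)
  then have "- (a + b) < s"
    by (rule power_less_imp_less_base) (use s_pos in linarith)
  with \<open>s < - a\<close> have "- 1 < q" and "q < 0"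
    unfolding q_def using b by (simp_all add: field_simps)
  then show "\<bar>q\<bar> < 1"
    by simp
qed

text \<open>\<open>q\<close> is the root of \<open>b q\<^sup>2 - 2 a q + b = 0\<close> inside the unit interval, which makes
  \<open>a - b cos k\<close> proportional to \<open>|1 - q e\<^bsup>ik\<^esup>|\<^sup>2 = 1 - 2 q cos k + q\<^sup>2\<close>.\<close>

lemma poisson_parameter_kernel_eq:
  fixes a b :: real
  assumes b: "b > 0" and ab: "a + b < 0"
  defines "s \<equiv> sqrt ((a + b) * (a - b))"
  defines "q \<equiv> (a + s) / b"
  shows "s * (1 - 2 * q * cos k + q\<^sup>2) = (q\<^sup>2 - 1) * (a - b * cos k)"
proof -
  have "(a + b) * (a - b) > 0"
    using ab b by (intro mult_neg_neg) auto
  then have s_sq: "s\<^sup>2 = a\<^sup>2 - b\<^sup>2"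
    unfolding s_def by (simp add: power2_eq_square algebra_simps)
  have bq: "b * q = a + s"
    unfolding q_def using b by simp
  have "b * (q * (a - s)) = (a + s) * (a - s)"
    by (metis bq mult.assoc)
  also have "\<dots> = b * b"
    using s_sq by (simp add: power2_eq_square algebra_simps)
  finally have qb: "q * (a - s) = b"
    using b by simp
  then have root: "a + s - q\<^sup>2 * (a - s) = 0"
    using bq by (metis power2_eq_square mult.assoc mult.commute diff_self)
  have "s * (1 - 2 * q * cos k + q\<^sup>2) - (q\<^sup>2 - 1) * (a - b * cos k)
        = (a + s - q\<^sup>2 * (a - s)) * (1 - q * cos k)"
    unfolding qb [symmetric] by (simp add: power2_eq_square algebra_simps)
  then show ?thesis
    unfolding root by simp
qed

lemma inverse_a_minus_b_cos_eq_poisson_kernel: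
  fixes a b :: real
  assumes b: "b > 0" and ab: "a + b < 0"
  defines "s \<equiv> sqrt ((a + b) * (a - b))"
  defines "q \<equiv> (a + s) / b"
  shows "1 / (a - b * cos k) = - 1 / s * ((1 - q\<^sup>2) / (1 - 2 * q * cos k + q\<^sup>2))"
proof -
  note s_pos = poisson_parameter_bounds(1)[OF b ab, folded s_def]
  note q = poisson_parameter_bounds(2)[OF b ab, folded s_def q_def]
  note kernel_eq = poisson_parameter_kernel_eq[OF b ab, of k, folded s_def q_def]
  have A: "a - b * cos k \<noteq> 0"
    using ab b mult_left_mono[OF cos_ge_minus_one[of k], of b] by simp
  moreover have "q\<^sup>2 \<noteq> 1"
    using q by (simp add: abs_square_eq_1)
  ultimately have P: "1 - 2 * q * cos k + q\<^sup>2 \<noteq> 0"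
    using kernel_eq s_pos by auto
  have "(1 - q\<^sup>2) * (a - b * cos k) = - (s * (1 - 2 * q * cos k + q\<^sup>2))"
    unfolding kernel_eq by (simp add: algebra_simps)
  then have "(1 - q\<^sup>2) / (1 - 2 * q * cos k + q\<^sup>2) = - s / (a - b * cos k)"
    unfolding frac_eq_eq[OF P A] by simp
  then show ?thesis
    using s_pos by simp
qed

lemma has_integral_cis_div_a_minus_b_cos:
  fixes a b :: real and n :: int
  assumes b: "b > 0" and ab: "a + b < 0"
  defines "s \<equiv> sqrt ((a + b) * (a - b))"
  defines "q \<equiv> (a + s) / b"
  shows "((\<lambda>k. cis (k * of_int n) / of_real (a - b * cos k)) has_integral
           of_real (- 2 * pi * q ^ nat \<bar>n\<bar> / s)) {0..2*pi}"
proof -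
  let ?P = "\<lambda>k. (1 - q\<^sup>2) / (1 - 2 * q * cos k + q\<^sup>2)"
  have "cis (k * of_int n) / of_real (a - b * cos k) = cis (k * of_int n) * of_real (1 / (a - b * cos k))" for k
    by (simp add: divide_inverse of_real_inverse)
  then have integrand_eq:
    "cis (k * of_int n) / of_real (a - b * cos k) = of_real (- 1 / s) * (cis (k * of_int n) * of_real (?P k))" for k
    unfolding inverse_a_minus_b_cos_eq_poisson_kernel[OF b ab, folded s_def q_def]
    by (simp only: of_real_mult mult_ac)
  have "((\<lambda>k. of_real (- 1 / s) * (cis (k * of_int n) * of_real (?P k)))
          has_integral of_real (- 1 / s) * of_real (2 * pi * q ^ nat \<bar>n\<bar>)) {0..2*pi}"
    using poisson_parameter_bounds(2)[OF b ab, folded s_def q_def]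
    by (intro has_integral_mult_right has_integral_cis_poisson_kernel)
  moreover have "of_real (- 1 / s) * of_real (2 * pi * q ^ nat \<bar>n\<bar>) = (of_real (- 2 * pi * q ^ nat \<bar>n\<bar> / s) :: complex)"
    by simp
  ultimately show ?thesis
    unfolding integrand_eq by (simp only:)
qed

lemma omega_sq_eq:
  assumes "\<xi> \<noteq> 0"
  shows "omega_sq \<xi> \<omega>\<^sub>0 k = \<omega>\<^sub>0\<^sup>2 * (1 + \<xi>\<^sup>2) / \<xi>\<^sup>2 - (2 * \<omega>\<^sub>0\<^sup>2 / \<xi>) * cos k"
proof -
  have "(\<xi> - cos k)\<^sup>2 + (sin k)\<^sup>2 = 1 + \<xi>\<^sup>2 - 2 * \<xi> * cos k"
    using sin_cos_squared_add[of k] by (simp add: power2_eq_square algebra_simps)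
  then show ?thesis
    unfolding omega_sq_def using assms by (simp add: field_simps power2_eq_square)
qed

lemma OmegaD_sq:
  assumes "\<xi> > 0"
  shows "(OmegaD \<xi> \<omega>\<^sub>0)\<^sup>2 = \<omega>\<^sub>0\<^sup>2 * (1 + \<xi>\<^sup>2) / \<xi>\<^sup>2 + 2 * \<omega>\<^sub>0\<^sup>2 / \<xi>"
  unfolding OmegaD_def using assms by (simp add: field_simps power2_eq_square)

lemma Omega0_sq:
  assumes "\<xi> > 0"
  shows "(Omega0 \<xi> \<omega>\<^sub>0)\<^sup>2 = \<omega>\<^sub>0\<^sup>2 * (1 + \<xi>\<^sup>2) / \<xi>\<^sup>2 - 2 * \<omega>\<^sub>0\<^sup>2 / \<xi>"
  unfolding Omega0_def using assms
  by (simp add: field_simps power2_eq_square power_mult_distrib abs_mult_self_eq)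

theorem mainTheorem3:
  fixes \<xi> \<omega>\<^sub>0 \<omega> :: real and n :: int
  assumes "\<xi> > 0" and "\<omega>\<^sub>0 > 0" and "\<omega> > OmegaD \<xi> \<omega>\<^sub>0"
  shows "greenG \<xi> \<omega>\<^sub>0 n \<omega> = complex_of_real (
     (-1 / sqrt (((OmegaD \<xi> \<omega>\<^sub>0)\<^sup>2 - \<omega>\<^sup>2) * ((Omega0 \<xi> \<omega>\<^sub>0)\<^sup>2 - \<omega>\<^sup>2))) *
     (((OmegaD \<xi> \<omega>\<^sub>0)\<^sup>2 + (Omega0 \<xi> \<omega>\<^sub>0)\<^sup>2 - 2 * \<omega>\<^sup>2
        + 2 * sqrt (((OmegaD \<xi> \<omega>\<^sub>0)\<^sup>2 - \<omega>\<^sup>2) * ((Omega0 \<xi> \<omega>\<^sub>0)\<^sup>2 - \<omega>\<^sup>2)))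
      / ((OmegaD \<xi> \<omega>\<^sub>0)\<^sup>2 - (Omega0 \<xi> \<omega>\<^sub>0)\<^sup>2)) ^ nat \<bar>n\<bar>)"
proof -
  define a where "a = \<omega>\<^sub>0\<^sup>2 * (1 + \<xi>\<^sup>2) / \<xi>\<^sup>2 - \<omega>\<^sup>2"
  define b where "b = 2 * \<omega>\<^sub>0\<^sup>2 / \<xi>"
  define s where "s = sqrt ((a + b) * (a - b))"
  define q where "q = (a + s) / b"
  have D: "(OmegaD \<xi> \<omega>\<^sub>0)\<^sup>2 - \<omega>\<^sup>2 = a + b" and O: "(Omega0 \<xi> \<omega>\<^sub>0)\<^sup>2 - \<omega>\<^sup>2 = a - b"
    unfolding a_def b_def OmegaD_sq[OF assms(1)] Omega0_sq[OF assms(1)] by simp_all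
  have "b > 0"
    unfolding b_def using assms(1,2) by simp
  have "(OmegaD \<xi> \<omega>\<^sub>0)\<^sup>2 < \<omega>\<^sup>2"
    using assms by (intro power_strict_mono) (auto simp: OmegaD_def)
  then have "a + b < 0"
    using D by simp
  have dispersion: "omega_sq \<xi> \<omega>\<^sub>0 k - \<omega>\<^sup>2 = a - b * cos k" for k
    using omega_sq_eq[of \<xi> \<omega>\<^sub>0 k] assms(1) unfolding a_def b_def by simp
  have "((\<lambda>k. cis (k * of_int n) / of_real (omega_sq \<xi> \<omega>\<^sub>0 k - \<omega>\<^sup>2)) has_integral
          of_real (- 2 * pi * q ^ nat \<bar>n\<bar> / s)) {0..2*pi}"
    unfolding dispersion s_def q_def
    by (rule has_integral_cis_div_a_minus_b_cos[OF \<open>b > 0\<close> \<open>a + b < 0\<close>])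
  then have green: "greenG \<xi> \<omega>\<^sub>0 n \<omega> = of_real (- (q ^ nat \<bar>n\<bar>) / s)"
    unfolding greenG_def by (simp add: integral_unique)
  have sum: "(OmegaD \<xi> \<omega>\<^sub>0)\<^sup>2 + (Omega0 \<xi> \<omega>\<^sub>0)\<^sup>2 - 2 * \<omega>\<^sup>2 = 2 * a"
    and diff: "(OmegaD \<xi> \<omega>\<^sub>0)\<^sup>2 - (Omega0 \<xi> \<omega>\<^sub>0)\<^sup>2 = 2 * b"
    using D O by simp_all
  have "(2 * a + 2 * s) / (2 * b) = q"
    unfolding q_def using \<open>b > 0\<close> by (simp add: field_simps)
  then show ?thesis
    unfolding green sum diff D O s_def [symmetric] by simp
qed

end
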